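(* Let $V:\Omega\to[1,\infty)$ be measurable, $\varphi$ an admissible rate function, and $S$ a stochastic operator on $\mathcal M_V$. Assume: (1) $S$ satisfies the weak Lyapunov condition for $V,\varphi$: there exist $K>0$ and $0<\varsigma<1$ with $$\|S\mu\|_V+\varsigma\|\mu\|_{\varphi(V)}\le\|\mu\|_V+K\|\mu\|\qquad\text{for all }\mu\in\mathcal M_V;$$ (2) for some integer $N\ge1$, $S^N$ satisfies the local coupling condition for the weight $\varphi(V)$: there exist $0<\gamma_H<1$ and $A>K/\varsigma$ such that for every $\nu\in\mathcal N_{\varphi(V)}$ with $\|\nu\|_{\varphi(V)}\le A\|\nu\|$ one has $\|S^N\nu\|\le\gamma_H\|\nu\|$. Set $\beta:=(1-\gamma_H)/(KN)$, $\alpha:=\beta(\varsigma-K/A)>0$ and $|||\mu|||_V:=\|\mu\|+\beta\|\mu\|_V$ for $\mu\in\mathcal M_V$. Then for every $\nu\in\mathcal N_V$ there exists an integer $n$ with $N\le n\le 2N-1$ such that $$|||S^n\nu|||_V+\alpha\sum_{k=0}^{n-1}\|S^k\nu\|_{\varphi(V)}\le|||\nu|||_V .$$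
   Context: Let $(\Omega,\mathcal E)$ be a measurable space. $\mathcal M$ denotes the space of finite signed measures on $\Omega$, $\mathcal P\subset\mathcal M$ the set of probability measures, and $\mathcal N=\{\nu\in\mathcal M:\nu(\Omega)=0\}$. For $\mu\in\mathcal M$ with Hahn–Jordan decomposition $\mu=\mu_+-\mu_-$, $|\mu|=\mu_++\mu_-$ and $\|\mu\|=\int_\Omega d|\mu|$ is the total variation norm. For a measurable $W:\Omega\to[1,\infty)$, $\|\mu\|_W=\int_\Omega W\,d|\mu|$, $\mathcal M_W=\{\mu\in\mathcal M:\|\mu\|_W<\infty\}$, $\mathcal P_W=\mathcal P\cap\mathcal M_W$, $\mathcal N_W=\mathcal N\cap\mathcal M_W$. A stochastic operator is a linear map $S:\mathcal M\to\mathcal M$ with $S(\mathcal P)\subseteq\mathcal P$; it is a stochastic operator on $\mathcal M_W$ if moreover $S(\mathcal M_W)\subseteq\mathcal M_W$ and the restriction is bounded for $\|\cdot\|_W$. An admissible rate function is a concave function $\varphi:[1,\infty)\to[1,\infty)$ with $\varphi(1)=1$ and $\varphi(v)/v\to0$ as $v\to\infty$; $\varphi(V)$ denotes the composition $\varphi\circ V$. *)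

theory Defs
  imports "HOL-Analysis.Analysis"
begin

text \<open>Finite signed measures on the measurable space M, represented as real-valued
  set functions which vanish outside the sigma algebra and are countably additive.\<close>

definition fsm :: "'a measure \<Rightarrow> ('a set \<Rightarrow> real) set" where
  "fsm M = {\<mu>. (\<forall>A. A \<notin> sets M \<longrightarrow> \<mu> A = 0) \<and>
     (\<forall>F::nat \<Rightarrow> 'a set. range F \<subseteq> sets M \<longrightarrow> disjoint_family F \<longrightarrow>
        (\<lambda>i. \<mu> (F i)) sums \<mu> (\<Union>i. F i))}"

definition prob_fsm :: "'a measure \<Rightarrow> ('a set \<Rightarrow> real) set" where
  "prob_fsm M = {\<mu> \<in> fsm M. (\<forall>A\<in>sets M. 0 \<le> \<mu> A) \<and> \<mu> (space M) = 1}"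

definition tv_measure :: "'a measure \<Rightarrow> ('a set \<Rightarrow> real) \<Rightarrow> 'a measure" where
  "tv_measure M \<mu> = measure_of (space M) (sets M)
     (\<lambda>A. SUP P \<in> {P. finite P \<and> P \<subseteq> sets M \<and> disjoint P \<and> \<Union>P = A}.
              ennreal (\<Sum>B\<in>P. \<bar>\<mu> B\<bar>))"

definition wnorm_ext :: "'a measure \<Rightarrow> ('a \<Rightarrow> real) \<Rightarrow> ('a set \<Rightarrow> real) \<Rightarrow> ennreal" where
  "wnorm_ext M W \<mu> = (\<integral>\<^sup>+ x. ennreal (W x) \<partial>(tv_measure M \<mu>))"

definition wnorm :: "'a measure \<Rightarrow> ('a \<Rightarrow> real) \<Rightarrow> ('a set \<Rightarrow> real) \<Rightarrow> real" where
  "wnorm M W \<mu> = enn2real (wnorm_ext M W \<mu>)"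

definition tvnorm :: "'a measure \<Rightarrow> ('a set \<Rightarrow> real) \<Rightarrow> real" where
  "tvnorm M \<mu> = wnorm M (\<lambda>_. 1) \<mu>"

definition M_W :: "'a measure \<Rightarrow> ('a \<Rightarrow> real) \<Rightarrow> ('a set \<Rightarrow> real) set" where
  "M_W M W = {\<mu> \<in> fsm M. wnorm_ext M W \<mu> < \<infinity>}"

definition N_W :: "'a measure \<Rightarrow> ('a \<Rightarrow> real) \<Rightarrow> ('a set \<Rightarrow> real) set" where
  "N_W M W = {\<mu> \<in> M_W M W. \<mu> (space M) = 0}"

definition stochastic_op :: "'a measure \<Rightarrow> (('a set \<Rightarrow> real) \<Rightarrow> ('a set \<Rightarrow> real)) \<Rightarrow> bool" where
  "stochastic_op M S \<longleftrightarrow>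
     (\<forall>\<mu>\<in>fsm M. S \<mu> \<in> fsm M) \<and>
     (\<forall>\<mu>\<in>fsm M. \<forall>\<nu>\<in>fsm M. \<forall>a b::real.
         S (\<lambda>A. a * \<mu> A + b * \<nu> A) = (\<lambda>A. a * S \<mu> A + b * S \<nu> A)) \<and>
     (\<forall>\<mu>\<in>prob_fsm M. S \<mu> \<in> prob_fsm M)"

definition stochastic_op_W :: "'a measure \<Rightarrow> ('a \<Rightarrow> real) \<Rightarrow> (('a set \<Rightarrow> real) \<Rightarrow> ('a set \<Rightarrow> real)) \<Rightarrow> bool" where
  "stochastic_op_W M W S \<longleftrightarrow> stochastic_op M S \<and>
     (\<forall>\<mu>\<in>M_W M W. S \<mu> \<in> M_W M W) \<and>
     (\<exists>C. \<forall>\<mu>\<in>M_W M W. wnorm M W (S \<mu>) \<le> C * wnorm M W \<mu>)"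

definition admissible_rate :: "(real \<Rightarrow> real) \<Rightarrow> bool" where
  "admissible_rate \<phi> \<longleftrightarrow> concave_on {1..} \<phi> \<and> (\<forall>v\<ge>1. \<phi> v \<ge> 1) \<and> \<phi> 1 = 1 \<and>
     ((\<lambda>v. \<phi> v / v) \<longlongrightarrow> 0) at_top"

end

theory Submission
  imports Defs
begin

text \<open>
  The variation \<open>|\<mu>|\<close>, the supremum of \<open>\<Sum>B\<in>P. |\<mu> B|\<close> over finite measurable
  partitions \<open>P\<close>, is countably additive, so \<open>\<mu> = (|\<mu>| + \<mu>)/2 - (|\<mu>| - \<mu>)/2\<close> is a difference
  of nonnegative measures whose masses add up to the total variation norm of \<open>\<mu>\<close>. A stochastic
  operator maps nonnegative measures to nonnegative measures of the same mass; hence it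
  preserves total mass and does not increase the total variation norm. Along the orbit of a
  measure \<open>\<nu>\<close> of mass zero the total variation norms \<open>t k\<close> of \<open>S^k \<nu>\<close> therefore decrease,
  and, because a concave rate function grows at most linearly, every \<open>S^k \<nu>\<close> lies in the
  domain of the coupling condition.

  With \<open>a k\<close> and \<open>b k\<close> the \<open>V\<close>- and \<open>\<phi>(V)\<close>-norms of \<open>S^k \<nu>\<close>, summing the Lyapunov
  inequality gives \<open>a n + \<sigma> * (\<Sum>k<n. b k) \<le> a 0 + K * (\<Sum>k<n. t k)\<close>. Let \<open>j < N\<close> be the
  first index with \<open>b j \<le> A * t j\<close>. Before \<open>j\<close> each \<open>K * t k\<close> is absorbed by \<open>K / A * b k\<close>;
  the coupling condition gives \<open>t (j + N) \<le> \<gamma> * t 0\<close>, and the \<open>N\<close> remaining terms cost at most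
  \<open>K * N * t 0 = (1 - \<gamma>) * t 0 / \<beta>\<close>. This is the claim with \<open>n = j + N\<close>; if there is no
  such \<open>j\<close>, every term is absorbed and \<open>n = N\<close> works.
\<close>

section \<open>Total variation\<close>

definition measurable_partitions :: "'a measure \<Rightarrow> 'a set \<Rightarrow> 'a set set set" where
  "measurable_partitions M A = {P. finite P \<and> P \<subseteq> sets M \<and> disjoint P \<and> \<Union>P = A}"

definition variation :: "'a measure \<Rightarrow> ('a set \<Rightarrow> real) \<Rightarrow> 'a set \<Rightarrow> ennreal" where
  "variation M \<mu> A = (SUP P \<in> measurable_partitions M A. ennreal (\<Sum>B\<in>P. \<bar>\<mu> B\<bar>))"

lemma tv_measure_eq_variation: "tv_measure M \<mu> = measure_of (space M) (sets M) (variation M \<mu>)"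
  unfolding tv_measure_def variation_def measurable_partitions_def by simp

lemma fsm_sums:
  "\<mu> \<in> fsm M \<Longrightarrow> range F \<subseteq> sets M \<Longrightarrow> disjoint_family F \<Longrightarrow> (\<lambda>i. \<mu> (F i)) sums \<mu> (\<Union>i. F i)"
  unfolding fsm_def by blast

lemma fsm_notin_sets: "\<mu> \<in> fsm M \<Longrightarrow> A \<notin> sets M \<Longrightarrow> \<mu> A = 0"
  unfolding fsm_def by blast

lemma fsm_empty:
  assumes "\<mu> \<in> fsm M" shows "\<mu> {} = 0"
proof -
  have "(\<lambda>i. \<mu> {}) sums \<mu> (\<Union>i::nat. {})"
    by (rule fsm_sums[OF assms]) (auto simp: disjoint_family_on_def)
  then show ?thesis by (simp add: sums_iff summable_const_iff)
qed

lemma variation_upper: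
  "P \<in> measurable_partitions M A \<Longrightarrow> ennreal (\<Sum>B\<in>P. \<bar>\<mu> B\<bar>) \<le> variation M \<mu> A"
  unfolding variation_def by (rule SUP_upper)

lemma singleton_measurable_partition: "A \<in> sets M \<Longrightarrow> {A} \<in> measurable_partitions M A"
  by (simp add: measurable_partitions_def)

lemma abs_le_variation: "A \<in> sets M \<Longrightarrow> ennreal \<bar>\<mu> A\<bar> \<le> variation M \<mu> A"
  using variation_upper[OF singleton_measurable_partition, of A M \<mu>] by simp

lemma variation_empty:
  assumes "\<mu> {} = 0" shows "variation M \<mu> {} = 0"
proof -
  have "(\<Sum>B\<in>P. \<bar>\<mu> B\<bar>) = 0" if "P \<in> measurable_partitions M {}" for P
    using that assms by (intro sum.neutral) (auto simp: measurable_partitions_def)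
  then show ?thesis
    unfolding variation_def by (metis SUP_least ennreal_0 le_zero_eq)
qed

lemma sum_le_variation:
  assumes "\<mu> {} = 0" "finite I" "h ` I \<subseteq> sets M" "disjoint_family_on h I"
  shows "ennreal (\<Sum>i\<in>I. \<bar>\<mu> (h i)\<bar>) \<le> variation M \<mu> (\<Union>i\<in>I. h i)"
proof -
  have "h ` I \<in> measurable_partitions M (\<Union>i\<in>I. h i)"
    using assms disjoint_family_on_disjoint_image unfolding measurable_partitions_def by blast
  moreover have "(\<Sum>B\<in>h ` I. \<bar>\<mu> B\<bar>) = (\<Sum>i\<in>I. \<bar>\<mu> (h i)\<bar>)"
  proof (subst sum.reindex_nontrivial)
    fix i j assume "i \<in> I" "j \<in> I" "i \<noteq> j" "h i = h j"
    then have "h i = {}"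
      using assms(4) unfolding disjoint_family_on_def by auto
    then show "\<bar>\<mu> (h i)\<bar> = 0"
      using assms(1) by simp
  qed (simp_all add: assms(2))
  ultimately show ?thesis
    using variation_upper[of "h ` I" M "\<Union>i\<in>I. h i" \<mu>] by simp
qed

lemma variation_Un_superadditive:
  assumes "\<mu> {} = 0" "X \<in> sets M" "Y \<in> sets M" "X \<inter> Y = {}"
  shows "variation M \<mu> X + variation M \<mu> Y \<le> variation M \<mu> (X \<union> Y)"
proof -
  have partition_sum: "ennreal (\<Sum>B\<in>P. \<bar>\<mu> B\<bar>) + ennreal (\<Sum>B\<in>Q. \<bar>\<mu> B\<bar>) \<le> variation M \<mu> (X \<union> Y)"
    if P: "P \<in> measurable_partitions M X" and Q: "Q \<in> measurable_partitions M Y" for P Q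
  proof -
    have P': "finite P" "P \<subseteq> sets M" "disjoint P" "\<Union>P = X"
      and Q': "finite Q" "Q \<subseteq> sets M" "disjoint Q" "\<Union>Q = Y"
      using P Q by (simp_all add: measurable_partitions_def)
    have "disjoint (P \<union> Q)"
      using P'(3,4) Q'(3,4) assms(4) by (intro disjoint_union) simp_all
    then have "P \<union> Q \<in> measurable_partitions M (X \<union> Y)"
      using P' Q' by (auto simp: measurable_partitions_def)
    moreover have "\<bar>\<mu> B\<bar> = 0" if "B \<in> P \<inter> Q" for B
    proof -
      have "B \<subseteq> X \<inter> Y"
        using that P'(4) Q'(4) by blast
      then show ?thesis
        using assms(1,4) by simp
    qed
    then have "(\<Sum>B\<in>P \<union> Q. \<bar>\<mu> B\<bar>) = (\<Sum>B\<in>P. \<bar>\<mu> B\<bar>) + (\<Sum>B\<in>Q. \<bar>\<mu> B\<bar>)"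
      using P'(1) Q'(1) by (intro sum.union_inter_neutral) auto
    ultimately show ?thesis
      using variation_upper[of "P \<union> Q" M "X \<union> Y" \<mu>] by (simp add: ennreal_plus sum_nonneg)
  qed
  have nonempty: "measurable_partitions M X \<noteq> {}" "measurable_partitions M Y \<noteq> {}"
    using singleton_measurable_partition assms(2,3) by blast+
  show ?thesis
    unfolding variation_def[of M \<mu> X] ennreal_SUP_add_left[symmetric, OF nonempty(1)]
    unfolding variation_def[of M \<mu> Y] ennreal_SUP_add_right[OF nonempty(2)]
    by (intro SUP_least partition_sum)
qed

lemma variation_mono:
  assumes "\<mu> {} = 0" "X \<in> sets M" "Y \<in> sets M" "X \<subseteq> Y"
  shows "variation M \<mu> X \<le> variation M \<mu> Y"
proof -
  have "variation M \<mu> X \<le> variation M \<mu> X + variation M \<mu> (Y - X)" by simp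
  also have "\<dots> \<le> variation M \<mu> (X \<union> (Y - X))"
    using assms by (intro variation_Un_superadditive) auto
  also have "X \<union> (Y - X) = Y"
    using assms(4) by blast
  finally show ?thesis .
qed

lemma sum_variation_le_UNION:
  fixes F :: "nat \<Rightarrow> 'a set"
  assumes "\<mu> {} = 0" "range F \<subseteq> sets M" "disjoint_family F"
  shows "(\<Sum>i<n. variation M \<mu> (F i)) \<le> variation M \<mu> (\<Union>i<n. F i)"
proof (induction n)
  case (Suc n)
  have "F i \<inter> F n = {}" if "i < n" for i
    using assms(3) that by (simp add: disjoint_family_onD)
  then have "(\<Union>i<n. F i) \<inter> F n = {}"
    by blast
  then have "variation M \<mu> (\<Union>i<n. F i) + variation M \<mu> (F n) \<le> variation M \<mu> ((\<Union>i<n. F i) \<union> F n)"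
    using assms(1,2) by (intro variation_Un_superadditive) auto
  also have "(\<Union>i<n. F i) \<union> F n = (\<Union>i<Suc n. F i)"
    by (auto simp: lessThan_Suc)
  finally show ?case
    using Suc by (simp add: order_trans[OF add_right_mono])
qed simp

lemma abs_le_suminf_abs:
  fixes f :: "nat \<Rightarrow> real"
  assumes "f sums s"
  shows "ennreal \<bar>s\<bar> \<le> (\<Sum>i. ennreal \<bar>f i\<bar>)"
proof (rule LIMSEQ_le_const2)
  show "(\<lambda>n. ennreal \<bar>\<Sum>i<n. f i\<bar>) \<longlonglongrightarrow> ennreal \<bar>s\<bar>"
    using assms unfolding sums_def by (intro tendsto_ennrealI tendsto_rabs)
  have "ennreal \<bar>\<Sum>i<n. f i\<bar> \<le> (\<Sum>i<n. ennreal \<bar>f i\<bar>)" for n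
    by (simp add: sum_ennreal sum_abs ennreal_leI)
  also have "(\<Sum>i<n. ennreal \<bar>f i\<bar>) \<le> (\<Sum>i. ennreal \<bar>f i\<bar>)" for n
    by (rule sum_le_suminf) (auto intro: summableI)
  finally show "\<exists>N. \<forall>n\<ge>N. ennreal \<bar>\<Sum>i<n. f i\<bar> \<le> (\<Sum>i. ennreal \<bar>f i\<bar>)"
    by blast
qed

lemma countably_additive_variation:
  assumes \<mu>: "\<mu> \<in> fsm M"
  shows "countably_additive (sets M) (variation M \<mu>)"
  unfolding countably_additive_def
proof (intro allI impI)
  fix F :: "nat \<Rightarrow> 'a set"
  assume F: "range F \<subseteq> sets M" "disjoint_family F" "\<Union>(range F) \<in> sets M"
  have empty: "\<mu> {} = 0"
    using fsm_empty \<mu> .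
  show "(\<Sum>i. variation M \<mu> (F i)) = variation M \<mu> (\<Union>(range F))"
  proof (rule antisym)
    show "(\<Sum>i. variation M \<mu> (F i)) \<le> variation M \<mu> (\<Union>(range F))"
    proof (rule suminf_le_const)
      fix n
      have "(\<Sum>i<n. variation M \<mu> (F i)) \<le> variation M \<mu> (\<Union>i<n. F i)"
        using empty F(1,2) by (rule sum_variation_le_UNION)
      also have "\<dots> \<le> variation M \<mu> (\<Union>(range F))"
        using empty F by (intro variation_mono) auto
      finally show "(\<Sum>i<n. variation M \<mu> (F i)) \<le> variation M \<mu> (\<Union>(range F))" .
    qed (auto intro: summableI)
  next
    show "variation M \<mu> (\<Union>(range F)) \<le> (\<Sum>i. variation M \<mu> (F i))"
      unfolding variation_def[of M \<mu> "\<Union>(range F)"]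
    proof (rule SUP_least)
      fix P assume "P \<in> measurable_partitions M (\<Union>(range F))"
      then have P: "finite P" "P \<subseteq> sets M" "disjoint P" "\<Union>P = \<Union>(range F)"
        by (simp_all add: measurable_partitions_def)
      have "ennreal \<bar>\<mu> B\<bar> \<le> (\<Sum>i. ennreal \<bar>\<mu> (B \<inter> F i)\<bar>)" if "B \<in> P" for B
      proof (rule abs_le_suminf_abs)
        have "(\<lambda>i. \<mu> (B \<inter> F i)) sums \<mu> (\<Union>i. B \<inter> F i)"
          using F that P(2) by (intro fsm_sums[OF \<mu>]) (auto simp: disjoint_family_on_def)
        moreover have "(\<Union>i. B \<inter> F i) = B"
          using that P(4) by blast
        ultimately show "(\<lambda>i. \<mu> (B \<inter> F i)) sums \<mu> B"
          by simp
      qed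
      then have "(\<Sum>B\<in>P. ennreal \<bar>\<mu> B\<bar>) \<le> (\<Sum>B\<in>P. \<Sum>i. ennreal \<bar>\<mu> (B \<inter> F i)\<bar>)"
        by (rule sum_mono)
      also have "\<dots> = (\<Sum>i. \<Sum>B\<in>P. ennreal \<bar>\<mu> (B \<inter> F i)\<bar>)"
        by (rule suminf_sum[symmetric]) (auto intro: summableI)
      also have "\<dots> \<le> (\<Sum>i. variation M \<mu> (F i))"
      proof (rule suminf_le)
        fix i
        have "ennreal (\<Sum>B\<in>P. \<bar>\<mu> (B \<inter> F i)\<bar>) \<le> variation M \<mu> (\<Union>B\<in>P. B \<inter> F i)"
        proof (rule sum_le_variation[where \<mu>=\<mu>, OF empty P(1)])
          show "(\<lambda>B. B \<inter> F i) ` P \<subseteq> sets M"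
            using P(2) F(1) by blast
          show "disjoint_family_on (\<lambda>B. B \<inter> F i) P"
            unfolding disjoint_family_on_def using disjointD[OF P(3)] by blast
        qed
        also have "(\<Union>B\<in>P. B \<inter> F i) = F i"
          using P(4) by blast
        finally show "(\<Sum>B\<in>P. ennreal \<bar>\<mu> (B \<inter> F i)\<bar>) \<le> variation M \<mu> (F i)"
          by (simp add: sum_ennreal)
      qed (auto intro: summableI)
      finally show "ennreal (\<Sum>B\<in>P. \<bar>\<mu> B\<bar>) \<le> (\<Sum>i. variation M \<mu> (F i))"
        by (simp add: sum_ennreal)
    qed
  qed
qed

lemma space_tv_measure [simp]: "space (tv_measure M \<mu>) = space M"
  unfolding tv_measure_eq_variation by (simp add: space_measure_of_conv)

lemma sets_tv_measure [simp]: "sets (tv_measure M \<mu>) = sets M"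
  unfolding tv_measure_eq_variation by (simp add: sets_measure_of_conv sets.space_closed sets.sigma_sets_eq)

lemma emeasure_tv_measure:
  assumes "\<mu> \<in> fsm M" "A \<in> sets M"
  shows "emeasure (tv_measure M \<mu>) A = variation M \<mu> A"
  unfolding tv_measure_eq_variation
proof (rule emeasure_measure_of_sigma)
  show "positive (sets M) (variation M \<mu>)"
    using variation_empty[of \<mu> M, OF fsm_empty[OF assms(1)]] by (simp add: positive_def)
  show "countably_additive (sets M) (variation M \<mu>)"
    using assms(1) by (rule countably_additive_variation)
qed (simp_all add: assms(2) sets.sigma_algebra_axioms)

lemma tvnorm_eq_measure: "tvnorm M \<mu> = measure (tv_measure M \<mu>) (space M)"
  by (simp add: tvnorm_def wnorm_def wnorm_ext_def measure_def)

section \<open>Jordan decomposition and stochastic operators\<close>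

lemma fsm_Un:
  assumes "\<mu> \<in> fsm M" "X \<in> sets M" "Y \<in> sets M" "X \<inter> Y = {}"
  shows "\<mu> (X \<union> Y) = \<mu> X + \<mu> Y"
proof -
  have "(\<lambda>i. \<mu> (binaryset X Y i)) sums (\<mu> X + \<mu> Y)"
    using fsm_empty[OF assms(1)] by (rule binaryset_sums)
  moreover have "(\<lambda>i. \<mu> (binaryset X Y i)) sums \<mu> (\<Union>i. binaryset X Y i)"
    using assms by (intro fsm_sums) (auto simp: range_binaryset_eq disjoint_family_on_def binaryset_def)
  ultimately show ?thesis
    by (simp add: UN_binaryset_eq sums_unique2)
qed

lemma fsm_sum_disjoint:
  assumes "\<mu> \<in> fsm M" "finite P" "P \<subseteq> sets M" "disjoint P"
  shows "(\<Sum>B\<in>P. \<mu> B) = \<mu> (\<Union>P)"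
  using assms(2-4)
proof (induction P rule: finite_induct)
  case empty
  then show ?case
    using fsm_empty[OF assms(1)] by simp
next
  case (insert B P)
  have "B \<inter> \<Union>P = {}"
    using insert.prems(2) insert.hyps(2) disjointD by fastforce
  moreover have "disjoint P"
    using insert.prems(2) by (simp add: pairwise_insert)
  ultimately show ?case
    using insert assms(1) by (simp add: fsm_Un sets.finite_Union)
qed

lemma fsm_nonneg_le_space:
  assumes "m \<in> fsm M" "\<forall>A\<in>sets M. 0 \<le> m A" "A \<in> sets M"
  shows "m A \<le> m (space M)"
proof -
  have "m (space M) = m (A \<union> (space M - A))"
    using sets.sets_into_space[OF assms(3)] by (simp add: Un_absorb1)
  also have "\<dots> = m A + m (space M - A)"
    using assms by (intro fsm_Un) auto
  finally show ?thesis
    using assms(2,3) by simp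
qed

lemma fsm_lincomb:
  assumes "\<mu> \<in> fsm M" "\<nu> \<in> fsm M"
  shows "(\<lambda>A. a * \<mu> A + b * \<nu> A) \<in> fsm M"
  using assms unfolding fsm_def by (auto intro!: sums_add sums_mult)

lemma fsm_measure_tv_measure:
  assumes "emeasure (tv_measure M \<mu>) (space M) < \<infinity>"
  shows "measure (tv_measure M \<mu>) \<in> fsm M"
proof -
  interpret finite_measure "tv_measure M \<mu>"
    using assms by (intro finite_measureI) simp
  show ?thesis
    unfolding fsm_def by (auto simp: measure_notin_sets intro: finite_measure_UNION)
qed

lemma abs_le_measure_tv_measure:
  assumes "\<mu> \<in> fsm M" "emeasure (tv_measure M \<mu>) (space M) < \<infinity>"
  shows "\<bar>\<mu> A\<bar> \<le> measure (tv_measure M \<mu>) A"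
proof (cases "A \<in> sets M")
  case True
  interpret finite_measure "tv_measure M \<mu>"
    using assms(2) by (intro finite_measureI) simp
  have "ennreal \<bar>\<mu> A\<bar> \<le> ennreal (measure (tv_measure M \<mu>) A)"
    using abs_le_variation[OF True] emeasure_tv_measure[OF assms(1) True]
    by (simp add: emeasure_eq_measure)
  then show ?thesis
    by simp
qed (simp add: fsm_notin_sets[OF assms(1)] measure_notin_sets)

lemma jordan_decomposition:
  assumes "\<mu> \<in> fsm M" "emeasure (tv_measure M \<mu>) (space M) < \<infinity>"
  obtains p n where "p \<in> fsm M" "n \<in> fsm M" "\<And>A. 0 \<le> p A" "\<And>A. 0 \<le> n A"
    "\<mu> = (\<lambda>A. p A - n A)" "p (space M) + n (space M) = tvnorm M \<mu>"
proof
  let ?tv = "measure (tv_measure M \<mu>)"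
  show "(\<lambda>A. (1/2) * ?tv A + (1/2) * \<mu> A) \<in> fsm M" "(\<lambda>A. (1/2) * ?tv A + (-1/2) * \<mu> A) \<in> fsm M"
    by (intro fsm_lincomb fsm_measure_tv_measure assms)+
  show "0 \<le> (1/2) * ?tv A + (1/2) * \<mu> A" "0 \<le> (1/2) * ?tv A + (-1/2) * \<mu> A" for A
    using abs_le_measure_tv_measure[OF assms, of A] by simp_all
qed (simp_all add: tvnorm_eq_measure)

lemma stochastic_op_lincomb:
  "stochastic_op M S \<Longrightarrow> \<mu> \<in> fsm M \<Longrightarrow> \<nu> \<in> fsm M \<Longrightarrow>
    S (\<lambda>A. a * \<mu> A + b * \<nu> A) = (\<lambda>A. a * S \<mu> A + b * S \<nu> A)"
  unfolding stochastic_op_def by blast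

lemma stochastic_op_nonneg:
  assumes S: "stochastic_op M S" and m: "m \<in> fsm M" "\<forall>A\<in>sets M. 0 \<le> m A"
  shows "\<forall>A\<in>sets M. 0 \<le> S m A" "S m (space M) = m (space M)"
proof -
  consider "m (space M) = 0" | "m (space M) > 0"
    using m(2) sets.top by (metis less_eq_real_def)
  then have "(\<forall>A\<in>sets M. 0 \<le> S m A) \<and> S m (space M) = m (space M)"
  proof cases
    case 1
    have "m A = 0" for A
    proof (cases "A \<in> sets M")
      case True
      then show ?thesis
        using fsm_nonneg_le_space[OF m True] m(2) 1 by fastforce
    qed (simp add: fsm_notin_sets[OF m(1)])
    then have "m = (\<lambda>A. 0 * m A + 0 * m A)"
      by auto
    then have "S m = (\<lambda>A. 0)"
      using stochastic_op_lincomb[OF S m(1) m(1), of 0 0] by simp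
    then show ?thesis
      using 1 by simp
  next
    case 2
    define p where "p A = m A / m (space M)" for A
    have "p \<in> fsm M"
      using fsm_lincomb[OF m(1) m(1), of "1 / m (space M)" 0] by (simp add: p_def[abs_def])
    then have "p \<in> prob_fsm M"
      using m(2) 2 by (simp add: prob_fsm_def p_def)
    then have Sp: "S p \<in> prob_fsm M"
      using S unfolding stochastic_op_def by blast
    have "m = (\<lambda>A. m (space M) * p A + 0 * p A)"
      using 2 by (simp add: p_def)
    then have "S m = (\<lambda>A. m (space M) * S p A)"
      using stochastic_op_lincomb[OF S \<open>p \<in> fsm M\<close> \<open>p \<in> fsm M\<close>, of "m (space M)" 0] by simp
    then show ?thesis
      using Sp 2 by (simp add: prob_fsm_def)
  qed
  then show "\<forall>A\<in>sets M. 0 \<le> S m A" "S m (space M) = m (space M)"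
    by simp_all
qed

lemma variation_diff_le:
  assumes "m1 \<in> fsm M" "\<forall>A\<in>sets M. 0 \<le> m1 A" "m2 \<in> fsm M" "\<forall>A\<in>sets M. 0 \<le> m2 A"
  shows "variation M (\<lambda>A. m1 A - m2 A) (space M) \<le> ennreal (m1 (space M) + m2 (space M))"
  unfolding variation_def
proof (rule SUP_least)
  fix P assume "P \<in> measurable_partitions M (space M)"
  then have P: "finite P" "P \<subseteq> sets M" "disjoint P" "\<Union>P = space M"
    by (simp_all add: measurable_partitions_def)
  have "(\<Sum>B\<in>P. \<bar>m1 B - m2 B\<bar>) \<le> (\<Sum>B\<in>P. m1 B) + (\<Sum>B\<in>P. m2 B)"
    unfolding sum.distrib[symmetric]
  proof (rule sum_mono)
    fix B assume "B \<in> P"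
    then have "0 \<le> m1 B" "0 \<le> m2 B"
      using P(2) assms(2,4) by auto
    then show "\<bar>m1 B - m2 B\<bar> \<le> m1 B + m2 B"
      by simp
  qed
  also have "\<dots> = m1 (space M) + m2 (space M)"
    using fsm_sum_disjoint[OF assms(1) P(1-3)] fsm_sum_disjoint[OF assms(3) P(1-3)] P(4) by simp
  finally show "ennreal (\<Sum>B\<in>P. \<bar>m1 B - m2 B\<bar>) \<le> ennreal (m1 (space M) + m2 (space M))"
    by (rule ennreal_leI)
qed

lemma stochastic_op_mass:
  assumes S: "stochastic_op M S" and \<mu>: "\<mu> \<in> fsm M" "emeasure (tv_measure M \<mu>) (space M) < \<infinity>"
  shows "S \<mu> (space M) = \<mu> (space M)"
proof -
  obtain p n where pn: "p \<in> fsm M" "n \<in> fsm M" "\<And>A. 0 \<le> p A" "\<And>A. 0 \<le> n A"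
    and "\<mu> = (\<lambda>A. p A - n A)"
    using jordan_decomposition[OF \<mu>] by blast
  then show ?thesis
    using stochastic_op_lincomb[OF S pn(1,2), of 1 "-1"]
      stochastic_op_nonneg(2)[OF S pn(1)] stochastic_op_nonneg(2)[OF S pn(2)] by simp
qed

lemma stochastic_op_tvnorm_le:
  assumes S: "stochastic_op M S" and \<mu>: "\<mu> \<in> fsm M" "emeasure (tv_measure M \<mu>) (space M) < \<infinity>"
  shows "tvnorm M (S \<mu>) \<le> tvnorm M \<mu>"
proof -
  obtain p n where pn: "p \<in> fsm M" "n \<in> fsm M" "\<And>A. 0 \<le> p A" "\<And>A. 0 \<le> n A"
    and \<mu>_eq: "\<mu> = (\<lambda>A. p A - n A)" and mass: "p (space M) + n (space M) = tvnorm M \<mu>"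
    using jordan_decomposition[OF \<mu>] by blast
  have S\<mu>: "S \<mu> = (\<lambda>A. S p A - S n A)"
    using stochastic_op_lincomb[OF S pn(1,2), of 1 "-1"] \<mu>_eq by simp
  have fsm_closed: "S \<nu> \<in> fsm M" if "\<nu> \<in> fsm M" for \<nu>
    using S that unfolding stochastic_op_def by blast
  have Sp: "\<forall>A\<in>sets M. 0 \<le> S p A" "S p (space M) = p (space M)"
    and Sn: "\<forall>A\<in>sets M. 0 \<le> S n A" "S n (space M) = n (space M)"
    using stochastic_op_nonneg[OF S pn(1)] stochastic_op_nonneg[OF S pn(2)] pn(3,4) by simp_all
  have "emeasure (tv_measure M (S \<mu>)) (space M) = variation M (\<lambda>A. S p A - S n A) (space M)"
    using emeasure_tv_measure[OF fsm_closed[OF \<mu>(1)] sets.top] by (simp add: S\<mu>)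
  also have "\<dots> \<le> ennreal (tvnorm M \<mu>)"
    using variation_diff_le[OF fsm_closed[OF pn(1)] Sp(1) fsm_closed[OF pn(2)] Sn(1)] Sp(2) Sn(2) mass
    by simp
  finally show ?thesis
    unfolding tvnorm_eq_measure[of M "S \<mu>"] measure_def
    by (intro enn2real_leI) (simp_all add: tvnorm_def wnorm_def)
qed

section \<open>Weighted norms and admissible rates\<close>

lemma M_W_tv_measure_finite:
  assumes "\<forall>x\<in>space M. 1 \<le> W x" "\<mu> \<in> M_W M W"
  shows "emeasure (tv_measure M \<mu>) (space M) < \<infinity>"
proof -
  have "emeasure (tv_measure M \<mu>) (space M) = (\<integral>\<^sup>+x. 1 \<partial>tv_measure M \<mu>)"
    by simp
  also have "\<dots> \<le> wnorm_ext M W \<mu>"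
    unfolding wnorm_ext_def using assms(1) by (intro nn_integral_mono) simp
  also have "\<dots> < \<infinity>"
    using assms(2) by (simp add: M_W_def)
  finally show ?thesis .
qed

lemma N_W_weight_mono:
  assumes "W \<in> borel_measurable M" "0 \<le> c" "\<forall>x\<in>space M. W' x \<le> c * W x" "\<mu> \<in> N_W M W"
  shows "\<mu> \<in> N_W M W'"
proof -
  have "wnorm_ext M W' \<mu> \<le> (\<integral>\<^sup>+x. ennreal c * ennreal (W x) \<partial>tv_measure M \<mu>)"
    unfolding wnorm_ext_def using assms(2,3)
    by (intro nn_integral_mono) (simp add: ennreal_mult'[symmetric] ennreal_leI)
  also have "\<dots> = ennreal c * wnorm_ext M W \<mu>"
    unfolding wnorm_ext_def using assms(1)
    by (intro nn_integral_cmult) (simp add: measurable_cong_sets[OF sets_tv_measure refl])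
  also have "\<dots> < \<infinity>"
    using assms(4) by (simp add: N_W_def M_W_def ennreal_mult_less_top)
  finally show ?thesis
    using assms(4) by (simp add: N_W_def M_W_def)
qed

lemma concave_nonneg_le_linear:
  fixes f :: "real \<Rightarrow> real"
  assumes f: "concave_on {1..} f" "\<forall>v\<ge>1. 0 \<le> f v" and v: "1 \<le> v"
  shows "f v \<le> 2 * f 2 * v"
proof (cases "v \<le> 2")
  case True
  have "concave_on {v..3} f"
    using convex_on_subset[of "{1..}" "\<lambda>x. - f x" "{v..3}"] f(1) v by (simp add: concave_on_def)
  then have "(f v - f 3) / (3 - v) * (3 - 2) + f 3 \<le> f 2"
    using True by (intro concave_onD_Icc'') auto
  then have "f v + (2 - v) * f 3 \<le> (3 - v) * f 2"
    using True by (simp add: field_simps)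
  moreover have "0 \<le> (2 - v) * f 3" "(3 - v) * f 2 \<le> (2 * v) * f 2"
    using True v f(2) by (auto intro: mult_right_mono)
  ultimately show ?thesis
    by (simp add: mult_ac)
next
  case False
  have "concave_on {1..v} f"
    using convex_on_subset[of "{1..}" "\<lambda>x. - f x" "{1..v}"] f(1) by (simp add: concave_on_def)
  then have "(f v - f 1) / (v - 1) * (2 - 1) + f 1 \<le> f 2"
    using False by (intro concave_onD_Icc') auto
  then have "f v + (v - 2) * f 1 \<le> (v - 1) * f 2"
    using False by (simp add: field_simps)
  moreover have "0 \<le> (v - 2) * f 1" "(v - 1) * f 2 \<le> (2 * v) * f 2"
    using False v f(2) by (auto intro: mult_right_mono)
  ultimately show ?thesis
    by (simp add: mult_ac)
qed

lemma admissible_rate_le_linear: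
  assumes "admissible_rate \<phi>" "1 \<le> v"
  shows "\<phi> v \<le> 2 * \<phi> 2 * v"
proof (rule concave_nonneg_le_linear)
  show "concave_on {1..} \<phi>" "\<forall>v\<ge>1. 0 \<le> \<phi> v"
    using assms(1) unfolding admissible_rate_def by (meson order.trans zero_le_one)+
qed (fact assms(2))

lemma stochastic_op_W_orbit:
  assumes S: "stochastic_op_W M W S" and W: "\<forall>x\<in>space M. 1 \<le> W x" and \<nu>: "\<nu> \<in> N_W M W"
  shows "(S ^^ k) \<nu> \<in> N_W M W" "tvnorm M ((S ^^ Suc k) \<nu>) \<le> tvnorm M ((S ^^ k) \<nu>)"
proof -
  have Sop: "stochastic_op M S"
    using S by (simp add: stochastic_op_W_def)
  have step: "S \<mu> \<in> N_W M W" "tvnorm M (S \<mu>) \<le> tvnorm M \<mu>" if "\<mu> \<in> N_W M W" for \<mu>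
  proof -
    have \<mu>: "\<mu> \<in> fsm M" "emeasure (tv_measure M \<mu>) (space M) < \<infinity>"
      using that M_W_tv_measure_finite[OF W] by (simp_all add: N_W_def M_W_def)
    show "S \<mu> \<in> N_W M W"
      using S that stochastic_op_mass[OF Sop \<mu>] by (simp add: stochastic_op_W_def N_W_def)
    show "tvnorm M (S \<mu>) \<le> tvnorm M \<mu>"
      using Sop \<mu> by (rule stochastic_op_tvnorm_le)
  qed
  show orbit: "(S ^^ k) \<nu> \<in> N_W M W"
    by (induction k) (simp_all add: \<nu> step(1))
  show "tvnorm M ((S ^^ Suc k) \<nu>) \<le> tvnorm M ((S ^^ k) \<nu>)"
    using step(2)[OF orbit] by simp
qed

section \<open>The descent inequality\<close>

lemma lyapunov_sum:
  fixes a b t :: "nat \<Rightarrow> real"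
  assumes "\<And>k. a (Suc k) + \<sigma> * b k \<le> a k + K * t k"
  shows "a n + \<sigma> * (\<Sum>k<n. b k) \<le> a 0 + K * (\<Sum>k<n. t k)"
proof (induction n)
  case (Suc n)
  then show ?case
    using assms[of n] by (simp add: algebra_simps)
qed simp

lemma lyapunov_descent_split:
  fixes a b t :: "nat \<Rightarrow> real"
  assumes tele: "a n + \<sigma> * (\<Sum>k<n. b k) \<le> a 0 + K * (\<Sum>k<n. t k)"
    and before: "\<forall>k<j. A * t k \<le> b k" and "j \<le> n"
    and after: "t n + \<beta> * K * (\<Sum>k\<in>{j..<n}. t k) \<le> t 0"
    and "0 \<le> \<beta>" "0 \<le> K" "0 < A" "\<And>k. 0 \<le> b k"
  shows "t n + \<beta> * a n + \<beta> * (\<sigma> - K / A) * (\<Sum>k<n. b k) \<le> t 0 + \<beta> * a 0"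
proof -
  have split: "(\<Sum>k<n. f k) = (\<Sum>k<j. f k) + (\<Sum>k\<in>{j..<n}. f k)" for f :: "nat \<Rightarrow> real"
    using \<open>j \<le> n\<close> by (simp add: atLeast0LessThan[symmetric] sum.atLeastLessThan_concat)
  have "K * (\<Sum>k<j. t k) \<le> K / A * (\<Sum>k<j. b k)"
    unfolding sum_distrib_left
  proof (rule sum_mono)
    fix k assume "k \<in> {..<j}"
    then have "t k \<le> b k / A"
      using before \<open>0 < A\<close> by (simp add: pos_le_divide_eq mult.commute)
    then show "K * t k \<le> K / A * b k"
      using mult_left_mono[of "t k" "b k / A" K] \<open>0 \<le> K\<close> by simp
  qed
  also have "\<dots> \<le> K / A * (\<Sum>k<n. b k)"
    using assms(6-8) by (intro mult_left_mono) (simp_all add: split[of b] sum_nonneg)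
  finally have "K * (\<Sum>k<n. t k) \<le> K / A * (\<Sum>k<n. b k) + K * (\<Sum>k\<in>{j..<n}. t k)"
    using split[of t] by (simp add: algebra_simps)
  with tele have "a n + (\<sigma> - K / A) * (\<Sum>k<n. b k) \<le> a 0 + K * (\<Sum>k\<in>{j..<n}. t k)"
    by (simp add: algebra_simps)
  then have "\<beta> * (a n + (\<sigma> - K / A) * (\<Sum>k<n. b k)) \<le> \<beta> * (a 0 + K * (\<Sum>k\<in>{j..<n}. t k))"
    using \<open>0 \<le> \<beta>\<close> by (rule mult_left_mono)
  with after show ?thesis
    by (simp add: algebra_simps)
qed

lemma contraction_tail_le:
  fixes t :: "nat \<Rightarrow> real"
  assumes t_dec: "\<And>k. t (Suc k) \<le> t k" and t_nonneg: "\<And>k. 0 \<le> t k"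
    and contract: "t (j + N) \<le> \<gamma> * t j" and "0 \<le> \<gamma>" "0 \<le> c" "c * real N \<le> 1 - \<gamma>"
  shows "t (j + N) + c * (\<Sum>k\<in>{j..<j + N}. t k) \<le> t 0"
proof -
  have t_le: "t k \<le> t i" if "i \<le> k" for i k
    using t_dec that by (rule decseqD[OF decseq_SucI])
  have head: "t (j + N) \<le> \<gamma> * t 0"
    using contract mult_left_mono[OF t_le[of 0 j] \<open>0 \<le> \<gamma>\<close>] by simp
  have "(\<Sum>k\<in>{j..<j + N}. t k) \<le> real N * t 0"
    using sum_bounded_above[of "{j..<j + N}" t "t 0"] t_le by simp
  then have "c * (\<Sum>k\<in>{j..<j + N}. t k) \<le> c * real N * t 0"
    using mult_left_mono[OF _ \<open>0 \<le> c\<close>] by (simp add: mult.assoc)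
  also have "\<dots> \<le> (1 - \<gamma>) * t 0"
    using assms(6) t_nonneg by (rule mult_right_mono)
  finally show ?thesis
    using head by (simp add: algebra_simps)
qed

lemma lyapunov_coupling_descent:
  fixes a b t :: "nat \<Rightarrow> real" and N :: nat
  assumes lyap: "\<And>k. a (Suc k) + \<sigma> * b k \<le> a k + K * t k"
    and t_dec: "\<And>k. t (Suc k) \<le> t k" and t_nonneg: "\<And>k. 0 \<le> t k" and b_nonneg: "\<And>k. 0 \<le> b k"
    and coupling: "\<And>j. b j \<le> A * t j \<Longrightarrow> t (j + N) \<le> \<gamma> * t j"
    and "1 \<le> N" "0 \<le> K" "0 < A" "0 \<le> \<gamma>" "0 \<le> \<beta>" "\<beta> * K * real N \<le> 1 - \<gamma>"
  shows "\<exists>n. N \<le> n \<and> n \<le> 2 * N - 1 \<and>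
    t n + \<beta> * a n + \<beta> * (\<sigma> - K / A) * (\<Sum>k<n. b k) \<le> t 0 + \<beta> * a 0"
proof -
  have t_le: "t k \<le> t i" if "i \<le> k" for i k
    using t_dec that by (rule decseqD[OF decseq_SucI])
  show ?thesis
  proof (cases "\<exists>j<N. b j \<le> A * t j")
    case True
    define j where "j = (LEAST j. j < N \<and> b j \<le> A * t j)"
    have j: "j < N" "b j \<le> A * t j"
      using LeastI_ex[OF True] unfolding j_def by auto
    have before: "\<forall>k<j. A * t k \<le> b k"
    proof (intro allI impI)
      fix k assume "k < j"
      then have "\<not> (k < N \<and> b k \<le> A * t k)"
        unfolding j_def by (rule not_less_Least)
      then show "A * t k \<le> b k"
        using \<open>k < j\<close> j(1) by auto
    qed
    have "t (j + N) + \<beta> * K * (\<Sum>k\<in>{j..<j + N}. t k) \<le> t 0"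
      using coupling[OF j(2)] assms(7,9,10,11)
      by (intro contraction_tail_le[where t = t, OF t_dec t_nonneg]) simp_all
    then have "t (j + N) + \<beta> * a (j + N) + \<beta> * (\<sigma> - K / A) * (\<Sum>k<j + N. b k) \<le> t 0 + \<beta> * a 0"
      by (rule lyapunov_descent_split[OF lyapunov_sum[of a \<sigma> b K t, OF lyap] before le_add1
          _ assms(10,7,8) b_nonneg])
    then show ?thesis
      using j(1) by (intro exI[of _ "j + N"]) auto
  next
    case False
    then have "\<forall>k<N. A * t k \<le> b k"
      by auto
    then have "t N + \<beta> * a N + \<beta> * (\<sigma> - K / A) * (\<Sum>k<N. b k) \<le> t 0 + \<beta> * a 0"
      using t_le[of 0 N]
      by (intro lyapunov_descent_split[where j = N and n = N, OF lyapunov_sum[of a \<sigma> b K t, OF lyap]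
          _ order_refl _ assms(10,7,8) b_nonneg]) simp_all
    then show ?thesis
      using \<open>1 \<le> N\<close> by (intro exI[of _ N]) auto
  qed
qed

theorem lemma4p3:
  fixes M :: "'a measure" and V :: "'a \<Rightarrow> real" and \<phi> :: "real \<Rightarrow> real"
    and S :: "('a set \<Rightarrow> real) \<Rightarrow> ('a set \<Rightarrow> real)"
    and K \<sigma> \<gamma> A :: real and N :: nat
  assumes V_meas: "V \<in> borel_measurable M"
    and V_ge1: "\<forall>x\<in>space M. 1 \<le> V x"
    and phi: "admissible_rate \<phi>"
    and S: "stochastic_op_W M V S"
    and K: "K > 0" and sigma: "0 < \<sigma>" "\<sigma> < 1"
    and lyap: "\<forall>\<mu>\<in>M_W M V.
        wnorm M V (S \<mu>) + \<sigma> * wnorm M (\<phi> \<circ> V) \<mu> \<le> wnorm M V \<mu> + K * tvnorm M \<mu>"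
    and N: "N \<ge> 1"
    and gamma: "0 < \<gamma>" "\<gamma> < 1"
    and A: "A > K / \<sigma>"
    and coupling: "\<forall>\<nu>\<in>N_W M (\<phi> \<circ> V). wnorm M (\<phi> \<circ> V) \<nu> \<le> A * tvnorm M \<nu> \<longrightarrow>
        tvnorm M ((S ^^ N) \<nu>) \<le> \<gamma> * tvnorm M \<nu>"
  shows "let \<beta> = (1 - \<gamma>) / (K * real N);
             \<alpha> = \<beta> * (\<sigma> - K / A);
             tn = (\<lambda>\<mu>. tvnorm M \<mu> + \<beta> * wnorm M V \<mu>)
         in \<forall>\<nu>\<in>N_W M V. \<exists>n. N \<le> n \<and> n \<le> 2 * N - 1 \<and>
              tn ((S ^^ n) \<nu>) + \<alpha> * (\<Sum>k<n. wnorm M (\<phi> \<circ> V) ((S ^^ k) \<nu>)) \<le> tn \<nu>"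
proof -
  define \<beta> where "\<beta> = (1 - \<gamma>) / (K * real N)"
  have \<beta>: "0 \<le> \<beta>" "\<beta> * K * real N \<le> 1 - \<gamma>"
    using K N gamma by (simp_all add: \<beta>_def)
  have A_pos: "0 < A"
    using divide_pos_pos[OF K sigma(1)] A by linarith
  have "\<exists>n. N \<le> n \<and> n \<le> 2 * N - 1 \<and>
      tvnorm M ((S ^^ n) \<nu>) + \<beta> * wnorm M V ((S ^^ n) \<nu>)
      + \<beta> * (\<sigma> - K / A) * (\<Sum>k<n. wnorm M (\<phi> \<circ> V) ((S ^^ k) \<nu>))
      \<le> tvnorm M \<nu> + \<beta> * wnorm M V \<nu>"
    if \<nu>: "\<nu> \<in> N_W M V" for \<nu>
  proof -
    note orbit = stochastic_op_W_orbit[OF S V_ge1 \<nu>]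
    have "1 \<le> \<phi> 2"
      using phi unfolding admissible_rate_def by (metis one_le_numeral)
    moreover have "\<forall>x\<in>space M. (\<phi> \<circ> V) x \<le> 2 * \<phi> 2 * V x"
      using V_ge1 admissible_rate_le_linear[OF phi] by simp
    ultimately have "(S ^^ k) \<nu> \<in> N_W M (\<phi> \<circ> V)" for k
      using N_W_weight_mono[OF V_meas _ _ orbit(1), of "2 * \<phi> 2"] by simp
    then have coupling_orbit: "tvnorm M ((S ^^ (j + N)) \<nu>) \<le> \<gamma> * tvnorm M ((S ^^ j) \<nu>)"
      if "wnorm M (\<phi> \<circ> V) ((S ^^ j) \<nu>) \<le> A * tvnorm M ((S ^^ j) \<nu>)" for j
      using coupling that by (simp add: funpow_add add.commute[of j])
    have lyap_orbit: "wnorm M V ((S ^^ Suc k) \<nu>) + \<sigma> * wnorm M (\<phi> \<circ> V) ((S ^^ k) \<nu>)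
        \<le> wnorm M V ((S ^^ k) \<nu>) + K * tvnorm M ((S ^^ k) \<nu>)" for k
      using lyap orbit(1)[of k] by (simp add: N_W_def)
    show ?thesis
      using lyapunov_coupling_descent[where a = "\<lambda>k. wnorm M V ((S ^^ k) \<nu>)"
          and b = "\<lambda>k. wnorm M (\<phi> \<circ> V) ((S ^^ k) \<nu>)" and t = "\<lambda>k. tvnorm M ((S ^^ k) \<nu>)",
          OF lyap_orbit orbit(2) _ _ coupling_orbit N _ A_pos _ \<beta>] K gamma(1)
      by (simp add: tvnorm_def wnorm_def)
  qed
  then show ?thesis
    unfolding Let_def \<beta>_def by (simp add: algebra_simps)
qed

end
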